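(* Consider a Kepler billiard in the plane $\mathbb{R}^2$: a particle moves under a Kepler(-Coulomb) potential centered at a point $F$, and is elastically reflected at a wall $\mathbf{K}$ which is a branch of a non-degenerate conic section having $F$ as a focus. Assume the total energy is non-zero, so that every Keplerian arc is an arc of a conic with one focus at $F$ and a well-defined semi-major axis $a$ (preserved under reflections), and each arc is determined up to orientation by its second focus. Let $F_1,F_2,\dots$ be the sequence of second foci of the successive Keplerian arcs along a billiard trajectory. Then: (i) if $\mathbf{K}$ is an ellipse or a branch of a hyperbola with foci $F$ and $F'$, all the points $F_i$ lie on one circle centered at $F'$; (ii) if $\mathbf{K}$ is a parabola with focus $F$, all the points $F_i$ lie on one line perpendicular to the axis of symmetry of the parabola.
   Context: Elastic reflection means the velocity is reflected with respect to the tangent line of $\mathbf{K}$ at the point of impact, preserving the energy. For an elliptic Keplerian orbit with semi-major axis $a$, the second focus $F_i$ is the point such that the orbit is the ellipse $\{P: |PF|+|PF_i|=2a\}$; for hyperbolic orbits it is the other focus of the hyperbola containing the arc. *)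

theory Defs
  imports "HOL-Analysis.Analysis"
begin

type_synonym pt = "real^2"

text \<open>Walls: non-degenerate conic (branches) having the Kepler centre F as a focus.
  Ellipse F' d     : the ellipse {P. dist P F + dist P F' = d}, with d > dist F F'
                     (F' = F allowed: a circle centred at F).
  HypBranch F' d   : the hyperbola branch {P. dist P F - dist P F' = d}, with d \<noteq> 0 and
                     abs d < dist F F' (the sign of d selects the branch).
  Parabola nv h    : the parabola with focus F and directrix {P. P \<bullet> nv = h},
                     nv a unit vector (direction of the axis of symmetry), F not on the directrix.\<close>
datatype wall = Ellipse pt real | HypBranch pt real | Parabola pt real

definition wall_valid :: "pt \<Rightarrow> wall \<Rightarrow> bool" where
  "wall_valid F w = (case w of
      Ellipse F' d \<Rightarrow> dist F F' < d
    | HypBranch F' d \<Rightarrow> d \<noteq> 0 \<and> \<bar>d\<bar> < dist F F'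
    | Parabola nv h \<Rightarrow> norm nv = 1 \<and> F \<bullet> nv \<noteq> h)"

definition wall_set :: "pt \<Rightarrow> wall \<Rightarrow> pt set" where
  "wall_set F w = (case w of
      Ellipse F' d \<Rightarrow> {P. dist P F + dist P F' = d}
    | HypBranch F' d \<Rightarrow> {P. dist P F - dist P F' = d}
    | Parabola nv h \<Rightarrow> {P. dist P F = \<bar>P \<bullet> nv - h\<bar>})"

text \<open>A normal vector of the wall at a point P of it: the gradient of the defining function
  (P \<mapsto> dist P F + dist P F', dist P F - dist P F', dist P F - abs (P \<bullet> nv - h)).\<close>
definition wall_normal :: "pt \<Rightarrow> wall \<Rightarrow> pt \<Rightarrow> pt" where
  "wall_normal F w P = (case w of
      Ellipse F' d \<Rightarrow> sgn (P - F) + sgn (P - F')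
    | HypBranch F' d \<Rightarrow> sgn (P - F) - sgn (P - F')
    | Parabola nv h \<Rightarrow> sgn (P - F) - sgn (P \<bullet> nv - h) *\<^sub>R nv)"

definition reflect_tangent :: "pt \<Rightarrow> pt \<Rightarrow> pt" where
  "reflect_tangent nu v = v - (2 * (v \<bullet> nu) / (nu \<bullet> nu)) *\<^sub>R nu"

definition kepler_acc :: "real \<Rightarrow> pt \<Rightarrow> pt \<Rightarrow> pt" where
  "kepler_acc mu F x = - (mu / norm (x - F) ^ 3) *\<^sub>R (x - F)"

definition kepler_energy :: "real \<Rightarrow> pt \<Rightarrow> pt \<Rightarrow> pt \<Rightarrow> real" where
  "kepler_energy mu F x v = norm v ^ 2 / 2 - mu / norm (x - F)"

definition ang_mom :: "pt \<Rightarrow> pt \<Rightarrow> pt \<Rightarrow> real" where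
  "ang_mom F x v = (x - F) $ 1 * v $ 2 - (x - F) $ 2 * v $ 1"

definition second_focus :: "pt \<Rightarrow> real \<Rightarrow> pt set \<Rightarrow> pt \<Rightarrow> bool" where
  "second_focus F E S G =
     ((E < 0 \<and> (\<exists>a>0. \<forall>P\<in>S. dist P F + dist P G = 2 * a)) \<or>
      (E > 0 \<and> (\<exists>a>0. \<forall>P\<in>S. \<bar>dist P F - dist P G\<bar> = 2 * a)))"

definition kepler_billiard_traj ::
  "real \<Rightarrow> pt \<Rightarrow> wall \<Rightarrow> nat \<Rightarrow> (nat \<Rightarrow> real) \<Rightarrow> (nat \<Rightarrow> real \<Rightarrow> pt) \<Rightarrow> (nat \<Rightarrow> real \<Rightarrow> pt) \<Rightarrow> bool"
where
  "kepler_billiard_traj mu F w n t x v \<longleftrightarrow>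
     (\<forall>i\<le>n. t i < t (Suc i) \<and>
        (\<forall>s\<in>{t i..t (Suc i)}. x i s \<noteq> F \<and>
           (x i has_vector_derivative v i s) (at s within {t i..t (Suc i)}) \<and>
           (v i has_vector_derivative kepler_acc mu F (x i s)) (at s within {t i..t (Suc i)}))) \<and>
     (\<forall>i\<in>{1..n}. x (i - 1) (t i) = x i (t i) \<and> x i (t i) \<in> wall_set F w \<and>
        v i (t i) = reflect_tangent (wall_normal F w (x i (t i))) (v (i - 1) (t i)))"

end

theory Submission
  imports Defs
begin

(* On a Kepler arc with energy E and angular momentum L \<noteq> 0, differentiating the focal equation
   |P - G| = |k - |P - F|| twice along the motion shows that the second focus G is given by the
   Laplace-Runge-Lenz vector A of the arc: E (G - F) = A, with E \<noteq> 0. At a point x of the arc with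
   velocity v, the quantities E^2 |G - Q|^2 and E (G - F).d therefore depend on v only through E and
   the products L L_Q, resp. L (d \<times> v), where L_Q is the angular momentum about Q. An elastic
   reflection at x keeps E, and reflection in the tangent line of a conic with foci F and F' swaps,
   up to sign, the unit vectors from x towards the two foci; hence it preserves L L_F', and for a
   parabola with axis nv it preserves L (nv \<times> v). So |G_i - F'|, resp. G_i.nv, is the same for all arcs. *)

section \<open>Planar cross product\<close>

definition cross2 :: "pt \<Rightarrow> pt \<Rightarrow> real" where
  "cross2 a b = a$1 * b$2 - a$2 * b$1"

lemma inner_real2: "a \<bullet> b = a$1 * b$1 + a$2 * b$2" for a b :: pt
  by (simp add: inner_vec_def sum_2)

lemma norm_real2_squared: "(norm a)\<^sup>2 = (a$1)\<^sup>2 + (a$2)\<^sup>2" for a :: pt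
  unfolding power2_norm_eq_inner inner_real2 by (simp add: power2_eq_square)

lemma cross2_scaleR_left [simp]: "cross2 (c *\<^sub>R a) b = c * cross2 a b"
  by (simp add: cross2_def algebra_simps)

lemma cross2_zero_left [simp]: "cross2 0 b = 0"
  by (simp add: cross2_def)

lemma cross2_minus_left [simp]: "cross2 (- a) b = - cross2 a b"
  by (simp add: cross2_def)

lemma cross2_norm_sgn_left: "cross2 a b = norm a * cross2 (sgn a) b"
  by (cases "a = 0") (simp_all add: sgn_div_norm)

lemma cross2_squared: "(cross2 a b)\<^sup>2 = (norm a)\<^sup>2 * (norm b)\<^sup>2 - (a \<bullet> b)\<^sup>2"
  unfolding cross2_def norm_real2_squared inner_real2 by algebra

lemma ang_mom_eq_cross2: "ang_mom F x v = cross2 (x - F) v"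
  by (simp add: ang_mom_def cross2_def)

lemma eq_if_inner_eq_cross2_nonzero:
  assumes "cross2 p q \<noteq> 0" and "x \<bullet> p = y \<bullet> p" and "x \<bullet> q = y \<bullet> q"
  shows "x = y"
proof -
  define d where "d = x - y"
  have "d \<bullet> p = 0" "d \<bullet> q = 0"
    using assms(2,3) by (simp_all add: d_def inner_diff_left)
  then have "cross2 p q * d$1 = 0" "cross2 p q * d$2 = 0"
    by (simp_all add: inner_real2 cross2_def) algebra+
  then have "d = 0"
    using assms(1) by (simp add: vec_eq_iff forall_2)
  then show ?thesis
    by (simp add: d_def)
qed

section \<open>Reflection in a tangent line\<close>

lemma reflect_tangent_zero [simp]: "reflect_tangent 0 v = v"
  by (simp add: reflect_tangent_def)

lemma reflect_tangent_scaleR: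
  "c \<noteq> 0 \<Longrightarrow> reflect_tangent (c *\<^sub>R nu) = reflect_tangent nu"
  by (auto simp: reflect_tangent_def fun_eq_iff field_simps)

lemma norm_reflect_tangent [simp]: "norm (reflect_tangent nu v) = norm v"
proof (cases "nu = 0")
  case False
  then have "(norm (reflect_tangent nu v))\<^sup>2 = (norm v)\<^sup>2"
    unfolding power2_norm_eq_inner reflect_tangent_def
    by (simp add: inner_diff_left inner_diff_right inner_commute field_simps power2_eq_square)
  then show ?thesis
    by simp
qed simp

lemma reflect_tangent_reflect_tangent [simp]:
  "reflect_tangent nu (reflect_tangent nu v) = v"
proof (cases "nu = 0")
  case False
  then show ?thesis
    by (simp add: reflect_tangent_def inner_diff_left field_simps)
qed simp

lemma cross2_reflect_tangent:
  assumes "nu \<noteq> 0"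
  shows "cross2 (reflect_tangent nu a) (reflect_tangent nu b) = - cross2 a b"
proof -
  define N where "N = nu \<bullet> nu"
  have "N \<noteq> 0"
    using assms by (simp add: N_def)
  have "cross2 (reflect_tangent nu a) (reflect_tangent nu b)
      = cross2 a b - 2 / N * ((b \<bullet> nu) * cross2 a nu + (a \<bullet> nu) * cross2 nu b)"
    by (simp add: reflect_tangent_def N_def cross2_def algebra_simps)
  also have "(b \<bullet> nu) * cross2 a nu + (a \<bullet> nu) * cross2 nu b = N * cross2 a b"
    unfolding N_def cross2_def inner_real2 by algebra
  finally show ?thesis
    using \<open>N \<noteq> 0\<close> by simp
qed

lemma reflect_tangent_unit_bisector:
  assumes "norm a = 1" "norm b = 1" "e\<^sup>2 = 1"
  shows "reflect_tangent (a + e *\<^sub>R b) a = - e *\<^sub>R b"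
proof (cases "a + e *\<^sub>R b = 0")
  case True
  then show ?thesis
    by (simp add: eq_neg_iff_add_eq_0)
next
  case False
  have "a \<bullet> a = 1" "b \<bullet> b = 1"
    using assms(1,2) by (simp_all add: norm_eq_1)
  then have "(a + e *\<^sub>R b) \<bullet> (a + e *\<^sub>R b) = 2 * (a \<bullet> (a + e *\<^sub>R b))"
    using assms(3) by (simp add: inner_add inner_commute power2_eq_square)
  moreover have "(a + e *\<^sub>R b) \<bullet> (a + e *\<^sub>R b) \<noteq> 0"
    using False by simp
  ultimately show ?thesis
    by (simp add: reflect_tangent_def inner_commute[of a])
qed

lemma cross2_reflect_tangent_unit_bisector:
  assumes "norm a = 1" "norm b = 1" "e\<^sup>2 = 1" "a + e *\<^sub>R b \<noteq> 0"
  shows "cross2 a (reflect_tangent (a + e *\<^sub>R b) u) = e * cross2 b u"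
proof -
  let ?R = "reflect_tangent (a + e *\<^sub>R b)"
  have "cross2 a (?R u) = cross2 (?R (?R a)) (?R u)"
    by simp
  also have "\<dots> = - cross2 (?R a) u"
    using assms(4) by (rule cross2_reflect_tangent)
  also have "\<dots> = e * cross2 b u"
    using assms(1-3) by (simp add: reflect_tangent_unit_bisector)
  finally show ?thesis .
qed

(* At a point P of a conic with foci P - p and P - q, the normal is sgn p + sgn q or sgn p - sgn q. *)
lemma cross2_product_reflect_tangent:
  fixes p q u :: pt
  assumes e: "e\<^sup>2 = 1"
  defines "R \<equiv> reflect_tangent (sgn p + e *\<^sub>R sgn q)"
  shows "cross2 p (R u) * cross2 q (R u) = cross2 p u * cross2 q u"
proof (cases "p = 0 \<or> q = 0 \<or> sgn p + e *\<^sub>R sgn q = 0")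
  case True
  then show ?thesis
    by (auto simp: R_def)
next
  case False
  then have unit: "norm (sgn p) = 1" "norm (sgn q) = 1" and nu: "sgn p + e *\<^sub>R sgn q \<noteq> 0"
    by (auto simp: norm_sgn)
  have swap: "sgn p + e *\<^sub>R sgn q = e *\<^sub>R (sgn q + e *\<^sub>R sgn p)"
    using e by (simp add: algebra_simps power2_eq_square)
  then have nu': "sgn q + e *\<^sub>R sgn p \<noteq> 0"
    using nu by auto
  have "e \<noteq> 0"
    using e by auto
  with swap have R_swap: "R = reflect_tangent (sgn q + e *\<^sub>R sgn p)"
    by (simp add: R_def reflect_tangent_scaleR)
  have "cross2 p (R u) = norm p * (e * cross2 (sgn q) u)"
    using cross2_reflect_tangent_unit_bisector[OF unit e nu]
    by (subst cross2_norm_sgn_left) (simp add: R_def)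
  moreover have "cross2 q (R u) = norm q * (e * cross2 (sgn p) u)"
    using cross2_reflect_tangent_unit_bisector[OF unit(2,1) e nu']
    by (subst cross2_norm_sgn_left) (simp add: R_swap)
  ultimately show ?thesis
    using e by (simp add: cross2_norm_sgn_left[of p u] cross2_norm_sgn_left[of q u] power2_eq_square)
qed

section \<open>The Laplace-Runge-Lenz vector\<close>

(* The Laplace-Runge-Lenz vector v \<times> L - mu (x - F) / |x - F| of the planar Kepler problem. *)
definition lrl_vector :: "real \<Rightarrow> pt \<Rightarrow> pt \<Rightarrow> pt \<Rightarrow> pt" where
  "lrl_vector mu F x v = ang_mom F x v *\<^sub>R vector [v$2, - v$1] - mu *\<^sub>R sgn (x - F)"

lemma inner_lrl_vector:
  "lrl_vector mu F x v \<bullet> f = ang_mom F x v * cross2 f v - mu * (sgn (x - F) \<bullet> f)"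
  by (simp add: lrl_vector_def inner_real2 cross2_def algebra_simps)

lemma norm_lrl_vector_squared:
  assumes "x \<noteq> F"
  shows "(norm (lrl_vector mu F x v))\<^sup>2 = mu\<^sup>2 + 2 * kepler_energy mu F x v * (ang_mom F x v)\<^sup>2"
proof -
  define L where "L = ang_mom F x v"
  define w :: pt where "w = vector [v$2, - v$1]"
  have "w \<bullet> (x - F) = L"
    by (simp add: w_def L_def inner_real2 ang_mom_def algebra_simps)
  then have "w \<bullet> sgn (x - F) = L / norm (x - F)"
    by (simp add: sgn_div_norm divide_inverse_commute)
  moreover have "w \<bullet> w = v \<bullet> v"
    by (simp add: w_def inner_real2 algebra_simps)
  moreover have "sgn (x - F) \<bullet> sgn (x - F) = 1"
    using assms by (simp add: norm_eq_1[symmetric] norm_sgn)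
  ultimately show ?thesis
    unfolding power2_norm_eq_inner lrl_vector_def kepler_energy_def L_def[symmetric] w_def[symmetric]
    by (simp add: inner_diff_left inner_diff_right inner_commute field_simps power2_eq_square)
qed

lemma norm_lrl_vector_diff_squared:
  fixes mu :: real and F x v Q :: pt
  assumes "x \<noteq> F"
  defines "E \<equiv> kepler_energy mu F x v"
  shows "(norm (lrl_vector mu F x v - E *\<^sub>R (Q - F)))\<^sup>2
    = mu\<^sup>2 + 2 * E * (ang_mom F x v * ang_mom Q x v) + 2 * E * mu * (sgn (x - F) \<bullet> (Q - F))
      + E\<^sup>2 * (norm (Q - F))\<^sup>2"
proof -
  define A where "A = lrl_vector mu F x v"
  define L where "L = ang_mom F x v"
  have "(norm (A - E *\<^sub>R (Q - F)))\<^sup>2 = (norm A)\<^sup>2 - 2 * E * (A \<bullet> (Q - F)) + E\<^sup>2 * (norm (Q - F))\<^sup>2"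
    unfolding power2_norm_eq_inner
    by (simp add: inner_commute algebra_simps power2_eq_square)
  moreover have "(norm A)\<^sup>2 = mu\<^sup>2 + 2 * E * L\<^sup>2"
    using norm_lrl_vector_squared[OF assms(1)] by (simp add: A_def E_def L_def)
  moreover have "A \<bullet> (Q - F) = L * cross2 (Q - F) v - mu * (sgn (x - F) \<bullet> (Q - F))"
    by (simp add: A_def L_def inner_lrl_vector)
  moreover have "L - cross2 (Q - F) v = ang_mom Q x v"
    by (simp add: L_def ang_mom_eq_cross2 cross2_def algebra_simps)
  ultimately show ?thesis
    unfolding A_def[symmetric] L_def[symmetric] by algebra
qed

lemma second_focus_dist_invariant:
  assumes "x \<noteq> F" "E \<noteq> 0"
    and "kepler_energy mu F x v = E" "kepler_energy mu F x v' = E"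
    and "ang_mom F x v' * ang_mom Q x v' = ang_mom F x v * ang_mom Q x v"
    and "E *\<^sub>R (G - F) = lrl_vector mu F x v" "E *\<^sub>R (G' - F) = lrl_vector mu F x v'"
  shows "dist G' Q = dist G Q"
proof -
  have "E\<^sup>2 * (dist H Q)\<^sup>2 = (norm (E *\<^sub>R (H - F) - E *\<^sub>R (Q - F)))\<^sup>2" for H
    by (simp add: dist_norm power_mult_distrib flip: scaleR_diff_right)
  moreover have "(norm (lrl_vector mu F x v' - E *\<^sub>R (Q - F)))\<^sup>2
      = (norm (lrl_vector mu F x v - E *\<^sub>R (Q - F)))\<^sup>2"
    using norm_lrl_vector_diff_squared[OF assms(1), of mu v Q]
      norm_lrl_vector_diff_squared[OF assms(1), of mu v' Q] assms(3-5)
    by simp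
  ultimately have "E\<^sup>2 * (dist G' Q)\<^sup>2 = E\<^sup>2 * (dist G Q)\<^sup>2"
    using assms(6,7) by simp
  then show ?thesis
    using \<open>E \<noteq> 0\<close> by simp
qed

lemma second_focus_inner_invariant:
  assumes "E \<noteq> 0"
    and "ang_mom F x v' * cross2 d v' = ang_mom F x v * cross2 d v"
    and "E *\<^sub>R (G - F) = lrl_vector mu F x v" "E *\<^sub>R (G' - F) = lrl_vector mu F x v'"
  shows "G' \<bullet> d = G \<bullet> d"
proof -
  have "E * ((G' - F) \<bullet> d) = E * ((G - F) \<bullet> d)"
    using assms(2-4) inner_lrl_vector[of mu F x _ d]
    by (metis inner_scaleR_left)
  then show ?thesis
    using \<open>E \<noteq> 0\<close> by (simp add: inner_diff_left)
qed

section \<open>Kepler arcs\<close>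

lemma has_real_derivative_inner:
  assumes "(f has_vector_derivative f') (at x within S)" "(g has_vector_derivative g') (at x within S)"
  shows "((\<lambda>y. f y \<bullet> g y) has_real_derivative f x \<bullet> g' + f' \<bullet> g x) (at x within S)"
  using bounded_bilinear.has_vector_derivative[OF bounded_bilinear_inner assms]
  by (simp add: has_real_derivative_iff_has_vector_derivative)

lemma has_real_derivative_norm:
  assumes "(f has_vector_derivative f') (at x within S)" "f x \<noteq> 0"
  shows "((\<lambda>y. norm (f y)) has_real_derivative (f x \<bullet> f') / norm (f x)) (at x within S)"
proof -
  have "((\<lambda>y. sqrt (f y \<bullet> f y)) has_real_derivative
      inverse (sqrt (f x \<bullet> f x)) / 2 * (f x \<bullet> f' + f' \<bullet> f x)) (at x within S)"
    using assms(2) by (intro DERIV_chain2[OF DERIV_real_sqrt has_real_derivative_inner[OF assms(1,1)]]) simp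
  then show ?thesis
    by (simp add: norm_eq_sqrt_inner[symmetric] inner_commute field_simps)
qed

lemma has_real_derivative_vec_nth:
  "(f has_vector_derivative f') F \<Longrightarrow> ((\<lambda>y. f y $ i) has_real_derivative f' $ i) F"
  using bounded_linear.has_vector_derivative[OF bounded_linear_vec_nth]
  by (simp add: has_real_derivative_iff_has_vector_derivative)

lemma has_real_derivative_zero_if_constant_on_interval:
  assumes "t0 < t1" "s \<in> {t0..t1}" "(f has_real_derivative d) (at s within {t0..t1})"
    and "\<forall>y\<in>{t0..t1}. f y = c"
  shows "d = 0"
proof -
  have "(f has_real_derivative 0) (at s within {t0..t1})"
    using assms(2,4) by (intro has_field_derivative_transform_within[where d = 1, OF DERIV_const]) auto
  then show ?thesis
    using vector_derivative_unique_within_closed_interval[of t0 t1 s f d 0] assms(1-3)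
    by (simp add: has_real_derivative_iff_has_vector_derivative)
qed

definition kepler_arc :: "real \<Rightarrow> pt \<Rightarrow> real \<Rightarrow> real \<Rightarrow> (real \<Rightarrow> pt) \<Rightarrow> (real \<Rightarrow> pt) \<Rightarrow> bool" where
  "kepler_arc mu F t0 t1 X V \<longleftrightarrow> (\<forall>s\<in>{t0..t1}. X s \<noteq> F \<and>
     (X has_vector_derivative V s) (at s within {t0..t1}) \<and>
     (V has_vector_derivative kepler_acc mu F (X s)) (at s within {t0..t1}))"

lemma kepler_arc_continuous_on: "kepler_arc mu F t0 t1 X V \<Longrightarrow> continuous_on {t0..t1} X"
  unfolding kepler_arc_def by (rule continuous_on_vector_derivative) auto

lemma ang_mom_kepler_arc:
  assumes "kepler_arc mu F t0 t1 X V" "s \<in> {t0..t1}"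
  shows "ang_mom F (X s) (V s) = ang_mom F (X t0) (V t0)"
proof -
  have "\<exists>c. \<forall>y\<in>{t0..t1}. ang_mom F (X y) (V y) = c"
  proof (rule has_field_derivative_zero_constant)
    fix y assume y: "y \<in> {t0..t1}"
    then have dX: "(X has_vector_derivative V y) (at y within {t0..t1})"
      and dV: "(V has_vector_derivative kepler_acc mu F (X y)) (at y within {t0..t1})"
      using assms(1) by (auto simp: kepler_arc_def)
    show "((\<lambda>y. ang_mom F (X y) (V y)) has_real_derivative 0) (at y within {t0..t1})"
      unfolding ang_mom_def vector_minus_component
      by (rule derivative_eq_intros has_real_derivative_vec_nth[OF dX] has_real_derivative_vec_nth[OF dV]
          refl)+
        (simp add: kepler_acc_def algebra_simps flip: add_divide_distrib diff_divide_distrib)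
  qed simp
  then show ?thesis
    using assms(2) by (metis atLeastAtMost_iff order.trans order_refl)
qed

lemma kepler_arc_derivatives:
  assumes "kepler_arc mu F t0 t1 X V" "y \<in> {t0..t1}"
  shows "((\<lambda>y. norm (X y - F)) has_real_derivative ((X y - F) \<bullet> V y) / norm (X y - F))
      (at y within {t0..t1})"
    and "((\<lambda>y. (X y - F) \<bullet> V y) has_real_derivative V y \<bullet> V y - mu / norm (X y - F))
      (at y within {t0..t1})"
    and "((\<lambda>y. (X y - F) \<bullet> g) has_real_derivative V y \<bullet> g) (at y within {t0..t1})"
    and "((\<lambda>y. V y \<bullet> g) has_real_derivative - mu / norm (X y - F) ^ 3 * ((X y - F) \<bullet> g))
      (at y within {t0..t1})"
proof -
  have "X y \<noteq> F"
    and dX: "((\<lambda>y. X y - F) has_vector_derivative V y) (at y within {t0..t1})"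
    and dV: "(V has_vector_derivative - (mu / norm (X y - F) ^ 3) *\<^sub>R (X y - F)) (at y within {t0..t1})"
    using assms by (auto simp: kepler_arc_def kepler_acc_def intro!: derivative_eq_intros)
  then show "((\<lambda>y. norm (X y - F)) has_real_derivative ((X y - F) \<bullet> V y) / norm (X y - F))
      (at y within {t0..t1})"
    by (intro has_real_derivative_norm) simp_all
  have "(X y - F) \<bullet> (- (mu / norm (X y - F) ^ 3) *\<^sub>R (X y - F)) = - mu / norm (X y - F)"
    using \<open>X y \<noteq> F\<close> by (simp add: dot_square_norm power2_eq_square power3_eq_cube)
  then show "((\<lambda>y. (X y - F) \<bullet> V y) has_real_derivative V y \<bullet> V y - mu / norm (X y - F))
      (at y within {t0..t1})"
    using has_real_derivative_inner[OF dX dV] by (rule_tac DERIV_cong) simp_all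
  show "((\<lambda>y. (X y - F) \<bullet> g) has_real_derivative V y \<bullet> g) (at y within {t0..t1})"
    using has_real_derivative_inner[OF dX has_vector_derivative_const] by simp
  show "((\<lambda>y. V y \<bullet> g) has_real_derivative - mu / norm (X y - F) ^ 3 * ((X y - F) \<bullet> g))
      (at y within {t0..t1})"
    using has_real_derivative_inner[OF dV has_vector_derivative_const] by simp
qed

lemma kepler_arc_focal_derivatives:
  assumes arc: "kepler_arc mu F t0 t1 X V" and "t0 < t1"
    and focal: "\<forall>s\<in>{t0..t1}. k * norm (X s - F) - (X s - F) \<bullet> g = c"
    and s: "s \<in> {t0..t1}"
  shows "k * ((X s - F) \<bullet> V s) = norm (X s - F) * (V s \<bullet> g)"
    and "mu * ((X s - F) \<bullet> g) = k * (mu * norm (X s - F) - (ang_mom F (X s) (V s))\<^sup>2)"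
proof -
  define r where "r y = norm (X y - F)" for y
  define p where "p y = (X y - F) \<bullet> V y" for y
  have r_pos: "r y > 0" if "y \<in> {t0..t1}" for y
    using arc that by (simp add: kepler_arc_def r_def)
  note d = kepler_arc_derivatives[OF arc, folded r_def p_def]
  have first: "k * p y / r y - V y \<bullet> g = 0" if "y \<in> {t0..t1}" for y
  proof (rule has_real_derivative_zero_if_constant_on_interval[where c = c, OF \<open>t0 < t1\<close> that])
    show "((\<lambda>y. k * r y - (X y - F) \<bullet> g) has_real_derivative k * p y / r y - V y \<bullet> g)
        (at y within {t0..t1})"
      using d(1,3)[OF that] by (auto intro!: derivative_eq_intros)
  qed (use focal in \<open>simp add: r_def\<close>)
  then show "k * ((X s - F) \<bullet> V s) = norm (X s - F) * (V s \<bullet> g)"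
    using first[OF s] r_pos[OF s] by (simp add: r_def p_def field_simps)
  have "((\<lambda>y. k * p y / r y - V y \<bullet> g) has_real_derivative
      (k * (V s \<bullet> V s - mu / r s) * r s - k * p s * (p s / r s)) / (r s * r s)
        + mu / r s ^ 3 * ((X s - F) \<bullet> g)) (at s within {t0..t1})"
    using d(1,2,4)[OF s] r_pos[OF s] by (auto intro!: derivative_eq_intros)
  then have "(k * (V s \<bullet> V s - mu / r s) * r s - k * p s * (p s / r s)) / (r s * r s)
      + mu / r s ^ 3 * ((X s - F) \<bullet> g) = 0"
    using first \<open>t0 < t1\<close> s
    by (intro has_real_derivative_zero_if_constant_on_interval[where c = 0]) auto
  then have "r s * (k * (r s ^ 2 * (V s \<bullet> V s) - (p s)\<^sup>2 - mu * r s) + mu * ((X s - F) \<bullet> g)) = 0"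
    using r_pos[OF s] by (simp add: field_simps power2_eq_square power3_eq_cube)
  then have "k * (r s ^ 2 * (V s \<bullet> V s) - (p s)\<^sup>2 - mu * r s) + mu * ((X s - F) \<bullet> g) = 0"
    using r_pos[OF s] by simp
  moreover have "(ang_mom F (X s) (V s))\<^sup>2 = r s ^ 2 * (V s \<bullet> V s) - (p s)\<^sup>2"
    by (simp add: ang_mom_eq_cross2 cross2_squared r_def p_def power2_norm_eq_inner)
  ultimately show "mu * ((X s - F) \<bullet> g) = k * (mu * norm (X s - F) - (ang_mom F (X s) (V s))\<^sup>2)"
    unfolding r_def by algebra
qed

(* As L \<noteq> 0, g is determined by its inner products with x - F and v; the focal equation then
   forces mu = - k E, i.e. E = - mu / (2 a) for an ellipse with major axis k = 2 a. *)
lemma second_focus_eq_lrl_vector: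
  fixes mu k :: real and F x v g :: pt
  assumes "x \<noteq> F" "mu \<noteq> 0" "k \<noteq> 0" "ang_mom F x v \<noteq> 0"
    and focal: "k * norm (x - F) - (x - F) \<bullet> g = (k\<^sup>2 - (norm g)\<^sup>2) / 2"
    and first: "k * ((x - F) \<bullet> v) = norm (x - F) * (v \<bullet> g)"
    and second: "mu * ((x - F) \<bullet> g) = k * (mu * norm (x - F) - (ang_mom F x v)\<^sup>2)"
  defines "E \<equiv> kepler_energy mu F x v"
  shows "E \<noteq> 0" and "E *\<^sub>R g = lrl_vector mu F x v"
proof -
  define A where "A = lrl_vector mu F x v"
  define L where "L = ang_mom F x v"
  define r where "r = norm (x - F)"
  have "r > 0"
    using assms(1) by (simp add: r_def)
  have A_x: "A \<bullet> (x - F) = L\<^sup>2 - mu * r"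
    using assms(1) by (simp add: A_def L_def r_def inner_lrl_vector ang_mom_eq_cross2 sgn_div_norm
        power2_eq_square dot_square_norm)
  have A_v: "A \<bullet> v = - mu * ((x - F) \<bullet> v) / r"
    by (simp add: A_def r_def inner_lrl_vector cross2_def sgn_div_norm divide_inverse_commute)
  have g_eq: "mu *\<^sub>R g = - k *\<^sub>R A"
  proof (rule eq_if_inner_eq_cross2_nonzero)
    show "cross2 (x - F) v \<noteq> 0"
      using assms(4) by (simp add: ang_mom_eq_cross2)
    have "(mu *\<^sub>R g) \<bullet> (x - F) = k * (mu * r - L\<^sup>2)"
      using second by (simp add: L_def r_def inner_commute)
    also have "\<dots> = (- k *\<^sub>R A) \<bullet> (x - F)"
      by (simp only: inner_scaleR_left A_x) (simp add: algebra_simps)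
    finally show "(mu *\<^sub>R g) \<bullet> (x - F) = (- k *\<^sub>R A) \<bullet> (x - F)" .
    have "(mu *\<^sub>R g) \<bullet> v = mu * (k * ((x - F) \<bullet> v) / r)"
      using first \<open>r > 0\<close> by (simp add: r_def inner_commute field_simps)
    also have "\<dots> = (- k *\<^sub>R A) \<bullet> v"
      by (simp only: inner_scaleR_left A_v) simp
    finally show "(mu *\<^sub>R g) \<bullet> v = (- k *\<^sub>R A) \<bullet> v" .
  qed
  have "g = (1 / mu) *\<^sub>R (mu *\<^sub>R g)"
    using assms(2) by simp
  also have "\<dots> = - (k / mu) *\<^sub>R A"
    by (simp add: g_eq)
  finally have g: "g = - (k / mu) *\<^sub>R A" .
  have "(norm A)\<^sup>2 = mu\<^sup>2 + 2 * E * L\<^sup>2"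
    using norm_lrl_vector_squared[OF assms(1)] by (simp add: A_def E_def L_def)
  then have "mu\<^sup>2 * (norm g)\<^sup>2 = k\<^sup>2 * (mu\<^sup>2 + 2 * E * L\<^sup>2)"
    using assms(2) by (simp add: g power_mult_distrib power_divide)
  moreover have "mu * ((x - F) \<bullet> g) = - k * (L\<^sup>2 - mu * r)"
    using assms(2) by (simp add: g inner_commute A_x)
  ultimately have "k * L\<^sup>2 * (mu + k * E) = 0"
    using focal unfolding r_def[symmetric] by algebra
  then have "mu = - k * E"
    using assms(3,4) by (simp add: L_def)
  then show "E \<noteq> 0"
    using assms(2) by auto
  show "E *\<^sub>R g = A"
    using \<open>mu = - k * E\<close> assms(2) by (simp add: g field_simps)
qed

lemma focal_equation_of_dist:
  assumes "(dist P G)\<^sup>2 = (k - dist P F)\<^sup>2"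
  shows "k * norm (P - F) - (P - F) \<bullet> (G - F) = (k\<^sup>2 - (norm (G - F))\<^sup>2) / 2"
proof -
  have "(dist P G)\<^sup>2 = (norm (P - F))\<^sup>2 - 2 * ((P - F) \<bullet> (G - F)) + (norm (G - F))\<^sup>2"
    unfolding dist_norm power2_norm_eq_inner
    by (simp add: inner_diff_left inner_diff_right inner_commute)
  then show ?thesis
    using assms by (simp add: dist_norm power2_eq_square algebra_simps)
qed

lemma second_focus_focal_equation:
  assumes "connected S" "second_focus F E S G"
  obtains k where "k \<noteq> 0"
    "\<forall>P\<in>S. k * norm (P - F) - (P - F) \<bullet> (G - F) = (k\<^sup>2 - (norm (G - F))\<^sup>2) / 2"
proof -
  have "\<exists>k. k \<noteq> 0 \<and> (\<forall>P\<in>S. (dist P G)\<^sup>2 = (k - dist P F)\<^sup>2)"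
  proof -
    from assms(2) consider (ellipse) a where "a > 0" "\<forall>P\<in>S. dist P F + dist P G = 2 * a"
      | (hyperbola) a where "a > 0" "\<forall>P\<in>S. \<bar>dist P F - dist P G\<bar> = 2 * a"
      unfolding second_focus_def by auto
    then show ?thesis
    proof cases
      case (ellipse a)
      then show ?thesis
        by (intro exI[of _ "2 * a"]) (auto simp: eq_diff_eq[symmetric])
    next
      case (hyperbola a)
      define \<phi> where "\<phi> P = dist P F - dist P G" for P
      have "\<phi> ` S \<subseteq> {2 * a, - 2 * a}"
        using hyperbola(2) by (auto simp: \<phi>_def abs_if split: if_splits)
      moreover have "continuous_on S \<phi>"
        unfolding \<phi>_def by (intro continuous_intros)
      ultimately have "\<phi> constant_on S"
        by (intro continuous_finite_range_constant assms(1)) (auto intro: finite_subset)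
      then obtain c where c: "\<forall>P\<in>S. \<phi> P = c"
        by (auto simp: constant_on_def)
      show ?thesis
      proof (cases "S = {}")
        case False
        then obtain P where "P \<in> S"
          by blast
        then have "c \<noteq> 0"
          using c hyperbola by (auto simp: \<phi>_def)
        with c show ?thesis
          by (intro exI[of _ c]) (auto simp: \<phi>_def power2_commute eq_diff_eq)
      qed auto
    qed
  qed
  then show ?thesis
    using that focal_equation_of_dist by blast
qed

lemma kepler_arc_second_focus:
  assumes arc: "kepler_arc mu F t0 t1 X V" "t0 < t1" and "mu \<noteq> 0"
    and "second_focus F E (X ` {t0..t1}) G"
    and s: "s \<in> {t0..t1}" "ang_mom F (X s) (V s) \<noteq> 0"
  shows "kepler_energy mu F (X s) (V s) \<noteq> 0"
    and "kepler_energy mu F (X s) (V s) *\<^sub>R (G - F) = lrl_vector mu F (X s) (V s)"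
proof -
  have "connected (X ` {t0..t1})"
    using kepler_arc_continuous_on[OF arc(1)] by (intro connected_continuous_image) simp_all
  then obtain k where "k \<noteq> 0"
    and focal: "\<forall>y\<in>{t0..t1}. k * norm (X y - F) - (X y - F) \<bullet> (G - F) = (k\<^sup>2 - (norm (G - F))\<^sup>2) / 2"
    using second_focus_focal_equation assms(4) by (metis (no_types, lifting) image_eqI)
  have "X s \<noteq> F"
    using arc(1) s(1) by (simp add: kepler_arc_def)
  note lrl = second_focus_eq_lrl_vector[OF \<open>X s \<noteq> F\<close> \<open>mu \<noteq> 0\<close> \<open>k \<noteq> 0\<close> s(2)
      focal[rule_format, OF s(1)] kepler_arc_focal_derivatives[OF arc focal s(1)]]
  show "kepler_energy mu F (X s) (V s) \<noteq> 0"
    by (fact lrl(1))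
  show "kepler_energy mu F (X s) (V s) *\<^sub>R (G - F) = lrl_vector mu F (X s) (V s)"
    by (fact lrl(2))
qed

section \<open>Kepler billiards\<close>

definition focus_invariant :: "wall \<Rightarrow> pt \<Rightarrow> real" where
  "focus_invariant w G = (case w of
      Ellipse F' d \<Rightarrow> dist G F'
    | HypBranch F' d \<Rightarrow> dist G F'
    | Parabola nv h \<Rightarrow> G \<bullet> nv)"

lemma reflection_preserves_focus_invariant:
  assumes "wall_valid F w" "P \<in> wall_set F w" "P \<noteq> F"
    and "E \<noteq> 0" "kepler_energy mu F P u = E"
    and "E *\<^sub>R (G - F) = lrl_vector mu F P u"
    and "E *\<^sub>R (G' - F) = lrl_vector mu F P (reflect_tangent (wall_normal F w P) u)"
  shows "focus_invariant w G' = focus_invariant w G"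
proof -
  define u' where "u' = reflect_tangent (wall_normal F w P) u"
  have E': "kepler_energy mu F P u' = E"
    using assms(5) by (simp add: u'_def kepler_energy_def)
  note G' = assms(7)[folded u'_def]
  have focal: "dist G' F' = dist G F'"
    if "wall_normal F w P = sgn (P - F) + e *\<^sub>R sgn (P - F')" "e\<^sup>2 = 1" for F' e
  proof (rule second_focus_dist_invariant[OF assms(3,4,5) E' _ assms(6) G'])
    show "ang_mom F P u' * ang_mom F' P u' = ang_mom F P u * ang_mom F' P u"
      using cross2_product_reflect_tangent[OF that(2)] by (simp add: u'_def that(1) ang_mom_eq_cross2)
  qed
  show ?thesis
  proof (cases w)
    case (Ellipse F' d)
    then have "dist G' F' = dist G F'"
      by (intro focal[where e = 1]) (simp_all add: wall_normal_def)
    then show ?thesis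
      by (simp add: Ellipse focus_invariant_def)
  next
    case (HypBranch F' d)
    then have "dist G' F' = dist G F'"
      by (intro focal[where e = "-1"]) (simp_all add: wall_normal_def)
    then show ?thesis
      by (simp add: HypBranch focus_invariant_def)
  next
    case (Parabola nv h)
    define e where "e = - sgn (P \<bullet> nv - h)"
    have "norm nv = 1"
      using assms(1) by (simp add: Parabola wall_valid_def)
    then have "wall_normal F w P = sgn (P - F) + e *\<^sub>R sgn nv"
      by (simp add: Parabola wall_normal_def e_def sgn_div_norm)
    moreover have "P \<bullet> nv - h \<noteq> 0"
      using assms(2,3) by (auto simp: Parabola wall_set_def)
    then have "e\<^sup>2 = 1"
      unfolding e_def by (cases "P \<bullet> nv - h > 0") simp_all
    ultimately have "ang_mom F P u' * cross2 nv u' = ang_mom F P u * cross2 nv u"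
      using cross2_product_reflect_tangent[of e "P - F" nv u] by (simp add: u'_def ang_mom_eq_cross2)
    then have "G' \<bullet> nv = G \<bullet> nv"
      by (rule second_focus_inner_invariant[OF assms(4) _ assms(6) G'])
    then show ?thesis
      by (simp add: Parabola focus_invariant_def)
  qed
qed

lemma kepler_billiard_traj_arc:
  assumes "kepler_billiard_traj mu F w n t x v" "i \<le> n"
  shows "kepler_arc mu F (t i) (t (Suc i)) (x i) (v i)" "t i < t (Suc i)"
  using assms by (auto simp: kepler_billiard_traj_def kepler_arc_def)

lemma kepler_billiard_traj_impact:
  assumes "kepler_billiard_traj mu F w n t x v" "i < n"
  defines "P \<equiv> x (Suc i) (t (Suc i))"
  shows "x i (t (Suc i)) = P" "P \<in> wall_set F w"
    "v (Suc i) (t (Suc i)) = reflect_tangent (wall_normal F w P) (v i (t (Suc i)))"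
proof -
  have "Suc i \<in> {1..n}"
    using assms(2) by simp
  with assms(1) have "x (Suc i - 1) (t (Suc i)) = P \<and> P \<in> wall_set F w \<and>
      v (Suc i) (t (Suc i)) = reflect_tangent (wall_normal F w P) (v (Suc i - 1) (t (Suc i)))"
    unfolding kepler_billiard_traj_def P_def by blast
  then show "x i (t (Suc i)) = P" "P \<in> wall_set F w"
    "v (Suc i) (t (Suc i)) = reflect_tangent (wall_normal F w P) (v i (t (Suc i)))"
    by simp_all
qed

lemma kepler_billiard_impact:
  assumes traj: "kepler_billiard_traj mu F w n t x v" and "mu \<noteq> 0"
    and L: "\<forall>i\<le>n. ang_mom F (x i (t i)) (v i (t i)) \<noteq> 0"
    and foci: "\<forall>i\<le>n. second_focus F (kepler_energy mu F (x i (t i)) (v i (t i)))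
                 (x i ` {t i..t (Suc i)}) (G i)"
    and "i < n"
  obtains P u where "P \<in> wall_set F w" "P \<noteq> F" "kepler_energy mu F P u \<noteq> 0"
    "kepler_energy mu F P u *\<^sub>R (G i - F) = lrl_vector mu F P u"
    "kepler_energy mu F P u *\<^sub>R (G (Suc i) - F)
      = lrl_vector mu F P (reflect_tangent (wall_normal F w P) u)"
proof
  define P where "P = x (Suc i) (t (Suc i))"
  define u where "u = v i (t (Suc i))"
  have "i \<le> n" "Suc i \<le> n"
    using \<open>i < n\<close> by simp_all
  note arc = kepler_billiard_traj_arc[OF traj \<open>i \<le> n\<close>]
  note arc' = kepler_billiard_traj_arc[OF traj \<open>Suc i \<le> n\<close>]
  note impact = kepler_billiard_traj_impact[OF traj \<open>i < n\<close>, folded P_def u_def]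
  have end_i: "t (Suc i) \<in> {t i..t (Suc i)}" and start: "t (Suc i) \<in> {t (Suc i)..t (Suc (Suc i))}"
    using arc(2) arc'(2) by simp_all
  have "ang_mom F (x i (t (Suc i))) (v i (t (Suc i))) \<noteq> 0"
    using ang_mom_kepler_arc[OF arc(1) end_i] L \<open>i \<le> n\<close> by simp
  note incoming = kepler_arc_second_focus[OF arc \<open>mu \<noteq> 0\<close> foci[rule_format, OF \<open>i \<le> n\<close>] end_i this]
  note outgoing = kepler_arc_second_focus[OF arc' \<open>mu \<noteq> 0\<close> foci[rule_format, OF \<open>Suc i \<le> n\<close>] start
      L[rule_format, OF \<open>Suc i \<le> n\<close>]]
  show "P \<in> wall_set F w"
    by (fact impact(2))
  show "P \<noteq> F"
    using arc'(1) start by (simp add: kepler_arc_def P_def)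
  show "kepler_energy mu F P u \<noteq> 0" "kepler_energy mu F P u *\<^sub>R (G i - F) = lrl_vector mu F P u"
    using incoming by (simp_all add: impact(1) u_def)
  have "kepler_energy mu F P (reflect_tangent (wall_normal F w P) u) = kepler_energy mu F P u"
    by (simp add: kepler_energy_def)
  then show "kepler_energy mu F P u *\<^sub>R (G (Suc i) - F)
      = lrl_vector mu F P (reflect_tangent (wall_normal F w P) u)"
    using outgoing(2) by (simp add: impact(3) P_def)
qed

theorem mainTheorem1:
  fixes mu :: real and F :: pt and w :: wall and n :: nat
    and t :: "nat \<Rightarrow> real" and x v :: "nat \<Rightarrow> real \<Rightarrow> pt" and G :: "nat \<Rightarrow> pt"
  assumes "mu \<noteq> 0"
    and "wall_valid F w"
    and "kepler_billiard_traj mu F w n t x v"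
    and "kepler_energy mu F (x 0 (t 0)) (v 0 (t 0)) \<noteq> 0"
    and "\<forall>i\<le>n. ang_mom F (x i (t i)) (v i (t i)) \<noteq> 0"
    and "\<forall>i\<le>n. second_focus F (kepler_energy mu F (x i (t i)) (v i (t i)))
                 (x i ` {t i..t (Suc i)}) (G i)"
  shows "(case w of
            Ellipse F' d \<Rightarrow> (\<exists>r. \<forall>i\<le>n. dist (G i) F' = r)
          | HypBranch F' d \<Rightarrow> (\<exists>r. \<forall>i\<le>n. dist (G i) F' = r)
          | Parabola nv h \<Rightarrow> (\<exists>c. \<forall>i\<le>n. G i \<bullet> nv = c))"
proof -
  have step: "focus_invariant w (G (Suc i)) = focus_invariant w (G i)" if i: "i < n" for i
  proof -
    obtain P u where "P \<in> wall_set F w" "P \<noteq> F" "kepler_energy mu F P u \<noteq> 0"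
      "kepler_energy mu F P u *\<^sub>R (G i - F) = lrl_vector mu F P u"
      "kepler_energy mu F P u *\<^sub>R (G (Suc i) - F)
        = lrl_vector mu F P (reflect_tangent (wall_normal F w P) u)"
      using kepler_billiard_impact[OF assms(3,1,5,6) i] by blast
    then show ?thesis
      using reflection_preserves_focus_invariant[OF assms(2)] by blast
  qed
  have "focus_invariant w (G i) = focus_invariant w (G 0)" if "i \<le> n" for i
    using that by (induction i) (simp_all add: step)
  then obtain c where "\<forall>i\<le>n. focus_invariant w (G i) = c"
    by blast
  then show ?thesis
    by (cases w) (auto simp: focus_invariant_def)
qed

end
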